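(* Let $G$ be a very well-covered graph with $V(G)=\{x_1,\ldots,x_h,y_1,\ldots,y_h\}$ such that $\{x_1,\ldots,x_h\}$ is a minimal vertex cover, $\{y_1,\ldots,y_h\}$ a maximal independent set and $\{x_i,y_i\}\in E(G)$ for all $i$. Let $s\ge1$, $e_1,\ldots,e_s\in E(G)$, and let $G'$ be the graph associated to $(I(G)^{s+1}:e_1\cdots e_s)$ as in the context. Suppose $(u=p_0)p_1\cdots p_{2k}(p_{2k+1}=v)$, $k\ge1$, is an even-connection in $G$ with respect to $e_1\cdots e_s$. If $\{w,p_i\}\in E(G')$ for some $0\le i\le 2k+1$, then $\{u,w\}\in E(G')$ or $\{v,w\}\in E(G')$.
   Context: $I(G)$ is the edge ideal; edges are identified with the products of their endpoints. $G$ is very well-covered if it has no isolated vertices, all minimal vertex covers have the same size, and this size is $|V(G)|/2$. Even-connection: a sequence $p_0p_1\cdots p_{2k+1}$, $k\ge1$, of vertices with $\{p_r,p_{r+1}\}\in E(G)$ for all $r$, each $\{p_{2\ell+1},p_{2\ell+2}\}$ ($0\le\ell\le k-1$) equal to some $e_m$, and each edge used among these at most as many times as it appears in $e_1,\dots,e_s$; then $p_0,p_{2k+1}$ (possibly equal) are even-connected. $(I(G)^{s+1}:e_1\cdots e_s)$ is minimally generated by $uv$ with $\{u,v\}\in E(G)$ or $u,v$ even-connected; $G'$ is the graph whose edge ideal is the polarization of this ideal (each generator $u^2$ replaced by $uu^*$ with a new vertex $u^*$), so for $u\ne v\in V(G)$, $\{u,v\}\in E(G')$ iff $\{u,v\}\in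 E(G)$ or $u,v$ are even-connected. *)

theory Defs
  imports Main "HOL-Library.Multiset"
begin

definition simple_graph :: "'a set \<Rightarrow> 'a set set \<Rightarrow> bool" where
  "simple_graph V E \<longleftrightarrow> finite V \<and>
     (\<forall>e\<in>E. \<exists>a b. e = {a, b} \<and> a \<noteq> b \<and> a \<in> V \<and> b \<in> V)"

definition vertex_cover :: "'a set \<Rightarrow> 'a set set \<Rightarrow> 'a set \<Rightarrow> bool" where
  "vertex_cover V E C \<longleftrightarrow> C \<subseteq> V \<and> (\<forall>e\<in>E. e \<inter> C \<noteq> {})"

definition minimal_vertex_cover :: "'a set \<Rightarrow> 'a set set \<Rightarrow> 'a set \<Rightarrow> bool" where
  "minimal_vertex_cover V E C \<longleftrightarrow> vertex_cover V E C \<and> (\<forall>D. D \<subset> C \<longrightarrow> \<not> vertex_cover V E D)"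

definition independent_set :: "'a set \<Rightarrow> 'a set set \<Rightarrow> 'a set \<Rightarrow> bool" where
  "independent_set V E S \<longleftrightarrow> S \<subseteq> V \<and> (\<forall>e\<in>E. \<not> e \<subseteq> S)"

definition maximal_independent_set :: "'a set \<Rightarrow> 'a set set \<Rightarrow> 'a set \<Rightarrow> bool" where
  "maximal_independent_set V E S \<longleftrightarrow> independent_set V E S \<and>
     (\<forall>T. S \<subset> T \<longrightarrow> \<not> independent_set V E T)"

definition very_well_covered :: "'a set \<Rightarrow> 'a set set \<Rightarrow> bool" where
  "very_well_covered V E \<longleftrightarrow> simple_graph V E \<and> (\<forall>v\<in>V. \<exists>e\<in>E. v \<in> e) \<and>
     (\<forall>C. minimal_vertex_cover V E C \<longrightarrow> 2 * card C = card V)"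

text \<open>Even-connection p 0, p 1, ..., p (2k+1) with respect to the product of the edges in
  the list es = [e_1,...,e_s] (multiplicities via multisets).\<close>
definition even_connection :: "'a set set \<Rightarrow> 'a set list \<Rightarrow> (nat \<Rightarrow> 'a) \<Rightarrow> nat \<Rightarrow> bool" where
  "even_connection E es p k \<longleftrightarrow> k \<ge> 1 \<and>
     (\<forall>r \<le> 2 * k. {p r, p (Suc r)} \<in> E) \<and>
     (\<forall>l < k. {p (2 * l + 1), p (2 * l + 2)} \<in> set es) \<and>
     mset (map (\<lambda>l. {p (2 * l + 1), p (2 * l + 2)}) [0..<k]) \<subseteq># mset es"

definition even_connected :: "'a set set \<Rightarrow> 'a set list \<Rightarrow> 'a \<Rightarrow> 'a \<Rightarrow> bool" where
  "even_connected E es a b \<longleftrightarrow>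
     (\<exists>p k. even_connection E es p k \<and> p 0 = a \<and> p (2 * k + 1) = b)"

text \<open>a*b is a (minimal) generator of (I(G)^(s+1) : e_1...e_s).  For a \<noteq> b this is exactly
  adjacency in G'; for a = b it means a^2 is a generator, i.e. the edge {a, a*} of G'.\<close>
definition colon_edge :: "'a set set \<Rightarrow> 'a set list \<Rightarrow> 'a \<Rightarrow> 'a \<Rightarrow> bool" where
  "colon_edge E es a b \<longleftrightarrow> {a, b} \<in> E \<or> even_connected E es a b"

end

theory Submission
  imports Defs
begin

text \<open>
  A walk from \<open>w\<close> to an inner vertex \<open>p i\<close> of the even-connection \<open>p\<close> is either an edge of
  \<open>G\<close> or an even-connection.  Follow it until it first uses an edge \<open>{p (2t+1), p (2t+2)}\<close> of
  \<open>p\<close>; at that moment it sits on an inner vertex of \<open>p\<close>.  Continuing along \<open>p\<close> from there,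
  forwards or backwards according to the parity of the position, reaches \<open>u\<close> or \<open>v\<close> and uses
  only edges of \<open>p\<close> not used before, so the glued walk is again an even-connection.
\<close>

lemma mset_take_subseteq: "mset (take n xs) \<subseteq># mset xs"
  by (metis append_take_drop_id mset_append mset_subset_eq_add_left)

lemma mset_drop_subseteq: "mset (drop n xs) \<subseteq># mset xs"
  by (metis append_take_drop_id mset_append mset_subset_eq_add_right)

lemma mset_subset_eq_add_disjoint:
  assumes "A \<subseteq># M" "B \<subseteq># M" "set_mset A \<inter> set_mset B = {}"
  shows "A + B \<subseteq># M"
proof -
  have "A \<inter># B = {#}"
    using assms(3) by (auto simp: disjunct_not_in)
  then have "A + B = A \<union># B"
    by (metis union_diff_inter_eq_sup diff_zero)
  then show ?thesis
    using assms(1,2) by simp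
qed

definition walk :: "'a set set \<Rightarrow> (nat \<Rightarrow> 'a) \<Rightarrow> nat \<Rightarrow> bool" where
  "walk E p k \<longleftrightarrow> (\<forall>r \<le> 2 * k. {p r, p (Suc r)} \<in> E)"

definition odd_edges :: "(nat \<Rightarrow> 'a) \<Rightarrow> nat \<Rightarrow> 'a set list" where
  "odd_edges p k = map (\<lambda>l. {p (2 * l + 1), p (2 * l + 2)}) [0..<k]"

lemma length_odd_edges [simp]: "length (odd_edges p k) = k"
  by (simp add: odd_edges_def)

lemma nth_odd_edges [simp]: "l < k \<Longrightarrow> odd_edges p k ! l = {p (2 * l + 1), p (2 * l + 2)}"
  by (simp add: odd_edges_def)

lemma set_odd_edges: "set (odd_edges p k) = {{p (2 * l + 1), p (2 * l + 2)} | l. l < k}"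
  by (auto simp: odd_edges_def)

lemma even_connection_iff:
  "even_connection E es p k \<longleftrightarrow> k \<ge> 1 \<and> walk E p k \<and> mset (odd_edges p k) \<subseteq># mset es"
proof -
  have "{p (2 * l + 1), p (2 * l + 2)} \<in> set es"
    if "mset (odd_edges p k) \<subseteq># mset es" "l < k" for l
  proof -
    have "{p (2 * l + 1), p (2 * l + 2)} \<in> set (odd_edges p k)"
      using that(2) by (auto simp: set_odd_edges)
    then show ?thesis
      using set_mset_mono[OF that(1)] by auto
  qed
  then show ?thesis
    unfolding even_connection_def walk_def odd_edges_def[symmetric] by blast
qed

lemma walk_prefix:
  assumes "walk E p k" "t \<le> k"
  shows "walk E p t" "odd_edges p t = take t (odd_edges p k)"
  using assms by (auto simp: walk_def intro: nth_equalityI)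

lemma walk_shift:
  assumes "walk E p k" "t \<le> k"
  shows "walk E (\<lambda>r. p (2 * t + r)) (k - t)"
    "odd_edges (\<lambda>r. p (2 * t + r)) (k - t) = drop t (odd_edges p k)"
proof -
  show "walk E (\<lambda>r. p (2 * t + r)) (k - t)"
    unfolding walk_def
  proof (intro allI impI)
    fix r assume "r \<le> 2 * (k - t)"
    then have "2 * t + r \<le> 2 * k"
      using assms(2) by linarith
    then show "{p (2 * t + r), p (2 * t + Suc r)} \<in> E"
      using assms(1) by (simp add: walk_def)
  qed
  show "odd_edges (\<lambda>r. p (2 * t + r)) (k - t) = drop t (odd_edges p k)"
    using assms by (intro nth_equalityI) (auto simp: algebra_simps)
qed

lemma walk_reverse:
  assumes "walk E p k"
  shows "walk E (\<lambda>r. p (2 * k + 1 - r)) k"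
    "odd_edges (\<lambda>r. p (2 * k + 1 - r)) k = rev (odd_edges p k)"
proof -
  show "walk E (\<lambda>r. p (2 * k + 1 - r)) k"
    unfolding walk_def
  proof (intro allI impI)
    fix r assume "r \<le> 2 * k"
    then have "{p (2 * k - r), p (Suc (2 * k - r))} \<in> E"
      and "2 * k + 1 - r = Suc (2 * k - r)" "2 * k + 1 - Suc r = 2 * k - r"
      using assms by (auto simp: walk_def)
    then show "{p (2 * k + 1 - r), p (2 * k + 1 - Suc r)} \<in> E"
      by (simp add: insert_commute)
  qed
  show "odd_edges (\<lambda>r. p (2 * k + 1 - r)) k = rev (odd_edges p k)"
  proof (rule nth_equalityI)
    fix l assume "l < length (odd_edges (\<lambda>r. p (2 * k + 1 - r)) k)"
    then have "l < k" by simp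
    moreover have "2 * k + 1 - (2 * l + 1) = 2 * (k - Suc l) + 2"
      "2 * k + 1 - (2 * l + 2) = 2 * (k - Suc l) + 1"
      using \<open>l < k\<close> by auto
    ultimately show "odd_edges (\<lambda>r. p (2 * k + 1 - r)) k ! l = rev (odd_edges p k) ! l"
      by (simp add: rev_nth insert_commute)
  qed simp
qed

lemma walk_glue:
  assumes a: "walk E a m" and b: "walk E b n" and ab: "a (2 * m + 1) = b 1"
  defines "c \<equiv> \<lambda>r. if r \<le> 2 * m then a r else b (r - 2 * m)"
  shows "walk E c (m + n)" "odd_edges c (m + n) = odd_edges a m @ odd_edges b n"
proof -
  show "walk E c (m + n)"
    unfolding walk_def
  proof (intro allI impI)
    fix r assume r: "r \<le> 2 * (m + n)"
    consider "r < 2 * m" | "r = 2 * m" | "r > 2 * m" by linarith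
    then show "{c r, c (Suc r)} \<in> E"
    proof cases
      case 3
      then have "r - 2 * m \<le> 2 * n" "Suc r - 2 * m = Suc (r - 2 * m)"
        using r by auto
      then show ?thesis
        using 3 b by (simp add: c_def walk_def)
    qed (use a ab in \<open>auto simp: c_def walk_def\<close>)
  qed
  show "odd_edges c (m + n) = odd_edges a m @ odd_edges b n"
  proof (rule nth_equalityI)
    fix l assume "l < length (odd_edges c (m + n))"
    then have "l < m + n" by simp
    moreover have "\<not> l < m \<Longrightarrow> 2 * l + 1 - 2 * m = 2 * (l - m) + 1 \<and> 2 * l + 2 - 2 * m = 2 * (l - m) + 2"
      by auto
    ultimately show "odd_edges c (m + n) ! l = (odd_edges a m @ odd_edges b n) ! l"
      by (auto simp: nth_append c_def)
  qed simp
qed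

lemma even_connected_glue:
  assumes "walk E a m" "walk E b n" "n \<ge> 1" "a (2 * m + 1) = b 1"
    and "mset (odd_edges a m @ odd_edges b n) \<subseteq># mset es"
  shows "even_connected E es (a 0) (b (2 * n + 1))"
proof -
  define c where "c \<equiv> \<lambda>r. if r \<le> 2 * m then a r else b (r - 2 * m)"
  note glue = walk_glue[OF assms(1,2,4), folded c_def]
  have "even_connection E es c (m + n)"
    using glue assms(3,5) by (simp add: even_connection_iff)
  moreover have "c 0 = a 0" "c (2 * (m + n) + 1) = b (2 * n + 1)"
    by (simp_all add: c_def)
  ultimately show ?thesis
    unfolding even_connected_def by metis
qed

lemma even_connected_sym:
  assumes "even_connected E es a b"
  shows "even_connected E es b a"
proof -
  obtain p k where p: "even_connection E es p k" "p 0 = a" "p (2 * k + 1) = b"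
    using assms unfolding even_connected_def by blast
  then have "even_connection E es (\<lambda>r. p (2 * k + 1 - r)) k"
    using walk_reverse[of E p k] by (simp add: even_connection_iff)
  then show ?thesis
    unfolding even_connected_def using p(2,3) by fastforce
qed

lemma colon_edge_sym: "colon_edge E es a b \<Longrightarrow> colon_edge E es b a"
  unfolding colon_edge_def using even_connected_sym by (metis insert_commute)

lemma colon_edge_walk:
  assumes "colon_edge E es a b"
  obtains q m where "walk E q m" "mset (odd_edges q m) \<subseteq># mset es" "q 0 = a" "q (2 * m + 1) = b"
proof (cases "{a, b} \<in> E")
  case True
  show ?thesis
    by (rule that[of "\<lambda>r. if r = 0 then a else b" 0]) (use True in \<open>auto simp: walk_def odd_edges_def\<close>)
next
  case False
  then obtain q m where "even_connection E es q m" "q 0 = a" "q (2 * m + 1) = b"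
    using assms unfolding colon_edge_def even_connected_def by blast
  then show ?thesis
    using that by (auto simp: even_connection_iff)
qed

lemma walk_from_inner_vertex_to_end:
  assumes p: "walk E p k" and i: "0 < i" "i < 2 * k + 1"
  obtains b n where "walk E b n" "n \<ge> 1" "b 1 = p i" "b (2 * n + 1) \<in> {p 0, p (2 * k + 1)}"
    "mset (odd_edges b n) \<subseteq># mset (odd_edges p k)"
proof (cases "odd i")
  case True
  then obtain t where t: "i = 2 * t + 1" "t < k"
    using i by (metis oddE add_less_cancel_right mult_less_cancel1 zero_less_numeral)
  have "2 * t + (2 * (k - t) + 1) = 2 * k + 1"
    using t by simp
  then show ?thesis
    using that[of "\<lambda>r. p (2 * t + r)" "k - t"] walk_shift[OF p, of t] t
    by (simp add: mset_drop_subseteq)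
next
  case False
  then obtain t where t: "i = 2 * t" "1 \<le> t" "t \<le> k"
    using i by (metis evenE less_one mult_0_right not_less add_less_cancel_right
        mult_le_cancel1 less_Suc_eq_le Suc_eq_plus1)
  note prefix = walk_prefix[OF p t(3)]
  have "mset (rev (take t (odd_edges p k))) \<subseteq># mset (odd_edges p k)"
    by (simp add: mset_take_subseteq)
  then show ?thesis
    using that[of "\<lambda>r. p (2 * t + 1 - r)" t] walk_reverse[OF prefix(1)] prefix(2) t
    by simp
qed

lemma even_connected_to_end_if_disjoint:
  assumes p: "walk E p k" "mset (odd_edges p k) \<subseteq># mset es"
    and q: "walk E q m" "mset (odd_edges q m) \<subseteq># mset es"
    and disjoint: "set (odd_edges q m) \<inter> set (odd_edges p k) = {}"
    and meet: "q (2 * m + 1) = p i" "0 < i" "i < 2 * k + 1"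
  shows "even_connected E es (q 0) (p 0) \<or> even_connected E es (q 0) (p (2 * k + 1))"
proof -
  obtain b n where b: "walk E b n" "n \<ge> 1" "b 1 = p i" "b (2 * n + 1) \<in> {p 0, p (2 * k + 1)}"
      and b_edges: "mset (odd_edges b n) \<subseteq># mset (odd_edges p k)"
    using walk_from_inner_vertex_to_end[OF p(1) meet(2,3)] by blast
  have "set (odd_edges b n) \<subseteq> set (odd_edges p k)"
    using set_mset_mono[OF b_edges] by simp
  then have "mset (odd_edges q m @ odd_edges b n) \<subseteq># mset es"
    using mset_subset_eq_add_disjoint[OF q(2) subset_mset.order_trans[OF b_edges p(2)]] disjoint
    by auto
  then have "even_connected E es (q 0) (b (2 * n + 1))"
    using even_connected_glue[OF q(1) b(1,2)] meet(1) b(3) by simp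
  then show ?thesis
    using b(4) by auto
qed

lemma even_connected_to_end:
  assumes p: "walk E p k" "mset (odd_edges p k) \<subseteq># mset es"
    and q: "walk E q m" "mset (odd_edges q m) \<subseteq># mset es"
    and meet: "q (2 * m + 1) \<in> p ` {1..2 * k}"
  shows "even_connected E es (q 0) (p 0) \<or> even_connected E es (q 0) (p (2 * k + 1))"
  using q meet
proof (induction m rule: less_induct)
  case (less m)
  obtain i where i: "q (2 * m + 1) = p i" "0 < i" "i < 2 * k + 1"
    using less.prems(3) by auto
  show ?case
  proof (cases "set (odd_edges q m) \<inter> set (odd_edges p k) = {}")
    case True
    then show ?thesis
      using even_connected_to_end_if_disjoint[OF p less.prems(1,2) True i] by blast
  next
    case False
    then obtain j t where j: "j < m" "t < k"
      and shared: "{q (2 * j + 1), q (2 * j + 2)} = {p (2 * t + 1), p (2 * t + 2)}"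
      by (auto simp: set_odd_edges)
    have "q (2 * j + 1) \<in> p ` {2 * t + 1, 2 * t + 2}"
      using shared by (metis image_insert image_empty insertI1)
    moreover have "{2 * t + 1, 2 * t + 2} \<subseteq> {1..2 * k}"
      using j(2) by auto
    ultimately have "q (2 * j + 1) \<in> p ` {1..2 * k}"
      by blast
    moreover note prefix = walk_prefix[OF less.prems(1) less_imp_le[OF j(1)]]
    moreover have "mset (odd_edges q j) \<subseteq># mset es"
      using prefix(2) less.prems(2) by (metis mset_take_subseteq subset_mset.order_trans)
    ultimately show ?thesis
      using less.IH[OF j(1)] by blast
  qed
qed

theorem lemma4p3:
  fixes V :: "'a set" and E :: "'a set set" and x y :: "nat \<Rightarrow> 'a" and h s k i :: nat
    and es :: "'a set list" and p :: "nat \<Rightarrow> 'a" and u v w :: 'a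
  assumes vwc: "very_well_covered V E"
    and inj_x: "inj_on x {1..h}" and inj_y: "inj_on y {1..h}"
    and disj: "x ` {1..h} \<inter> y ` {1..h} = {}"
    and V_eq: "V = x ` {1..h} \<union> y ` {1..h}"
    and mvc: "minimal_vertex_cover V E (x ` {1..h})"
    and mis: "maximal_independent_set V E (y ` {1..h})"
    and xy_edges: "\<forall>j\<in>{1..h}. {x j, y j} \<in> E"
    and s_pos: "s \<ge> 1" and es_len: "length es = s" and es_E: "set es \<subseteq> E"
    and ec: "even_connection E es p k" and u_def: "p 0 = u" and v_def: "p (2 * k + 1) = v"
    and i_le: "i \<le> 2 * k + 1"
    and w_V: "w \<in> V" and w_ne: "w \<noteq> p i"
    and w_edge: "colon_edge E es w (p i)"
  shows "colon_edge E es u w \<or> colon_edge E es v w"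
proof -
  consider "i = 0" | "i = 2 * k + 1" | "i \<in> {1..2 * k}"
    using i_le by fastforce
  then show ?thesis
  proof cases
    case 3
    obtain q m where q: "walk E q m" "mset (odd_edges q m) \<subseteq># mset es" "q 0 = w" "q (2 * m + 1) = p i"
      using colon_edge_walk[OF w_edge] by blast
    have "even_connected E es w u \<or> even_connected E es w v"
      using even_connected_to_end[of E p k es q m] ec q 3 u_def v_def
      by (auto simp: even_connection_iff)
    then have "even_connected E es u w \<or> even_connected E es v w"
      by (meson even_connected_sym)
    then show ?thesis
      unfolding colon_edge_def by blast
  qed (use colon_edge_sym[OF w_edge] u_def v_def in auto)
qed

end
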